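(* The subspaces $\mathcal{C}_0^{sym}$ and $\mathcal{C}_0^{cw}$ of $\mathcal{C}$ are orthogonal with respect to the mixed area: $A(\gamma_1,\gamma_2)=0$ for all $\gamma_1\in\mathcal{C}_0^{sym}$ and $\gamma_2\in\mathcal{C}_0^{cw}$. Moreover both subspaces are orthogonal to $\mathcal{U}=\{\lambda u:\lambda\in\mathbb{R}\}$.
   Context: Standing setting. $[a,b]$ is the $2\times2$ determinant with columns $a,b$. The unit ball $U$ of a normed plane is compact convex, origin-symmetric, with nonempty interior, and boundary $u=\partial U$ a union of $2n$ arcs $u_{i+n}=-u_i$, each a smooth strictly convex arc or a segment; $u$ is parameterized as a closed curve $u:[0,2T]\to\mathbb{R}^2$ with $u(t+T)=-u(t)$, smooth with $u'\ne0$ on each interval $[t_i,t_{i+1}]$ between vertices ($[u',u'']\neq 0$ on strictly convex arcs); on each such interval $v(t)=u'(t)/[u(t),u'(t)]$. Admissible class $\mathcal{C}$: closed continuous curves $\gamma:[0,2T]\to\mathbb{R}^2$ (extended $2T$-periodically), smooth on each $[t_i,t_{i+1}]$ with $\gamma'(t)=r(t)u'(t)$ for a scalar function $r$. Dual length $L_*(\gamma)=\int_0^{2T} r(t)[u,u'](t)\,dt$; mixed area $A(\gamma_1,\gamma_2)=\frac12\int_0^{2T}[\gamma_1,\gamma_2'](t)\,dt$. $\mathcal{C}_0^{sym}$ is the set of $\gamma\in\mathcal{C}$ with $\gamma(t+T)=-\gamma(t)$ for all $t$ and $L_*(\gamma)=0$. $\mathcal{C}_0^{cw}$ is the set of $\gamma\in\mathcal{C}$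 with $L_*(\gamma)=0$ that are of constant width, i.e. $[\gamma(t+T),v(t+T)]+[\gamma(t),v(t)]=c$ for a constant $c$ (necessarily $c=0$ here). *)

theory Defs
  imports "HOL-Analysis.Analysis"
begin

text \<open>Planar vectors are represented as pairs of reals.
  det2 a b is the 2x2 determinant [a,b] with columns a, b.\<close>
definition det2 :: "real \<times> real \<Rightarrow> real \<times> real \<Rightarrow> real" where
  "det2 a b = fst a * snd b - snd a * fst b"

fun dtr :: "nat \<Rightarrow> (real \<Rightarrow> 'a::real_normed_vector) \<Rightarrow> real \<Rightarrow> 'a" where
  "dtr 0 f = f"
| "dtr (Suc k) f = (\<lambda>s. vector_derivative (dtr k f) (at s))"

text \<open>Smooth (C-infinity) on the whole real line: all iterated derivatives exist everywhere.
  A function smooth on a closed interval is represented as the restriction of such a function.\<close>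
definition smooth_fun :: "(real \<Rightarrow> 'a::real_normed_vector) \<Rightarrow> bool" where
  "smooth_fun f \<longleftrightarrow> (\<forall>k s. dtr k f differentiable (at s))"

definition unit_ball_setting ::
  "real \<Rightarrow> nat \<Rightarrow> (nat \<Rightarrow> real) \<Rightarrow> (real \<Rightarrow> real \<times> real) \<Rightarrow> (real \<times> real) set \<Rightarrow> bool" where
  "unit_ball_setting T n tv u U \<longleftrightarrow>
     T > 0 \<and> n \<ge> 1 \<and>
     compact U \<and> convex U \<and> (\<forall>x\<in>U. - x \<in> U) \<and> interior U \<noteq> {} \<and>
     tv 0 = 0 \<and> tv (2*n) = 2*T \<and> (\<forall>i<2*n. tv i < tv (Suc i)) \<and>
     (\<forall>i\<le>n. tv (i+n) = tv i + T) \<and>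
     continuous_on UNIV u \<and> (\<forall>s. u (s + 2*T) = u s) \<and> (\<forall>s. u (s + T) = - u s) \<and>
     inj_on u {0..<2*T} \<and> frontier U = u ` {0..2*T} \<and>
     (\<forall>i<2*n. \<exists>f. smooth_fun f \<and>
        (\<forall>s\<in>{tv i..tv (Suc i)}. f s = u s \<and> dtr 1 f s \<noteq> 0) \<and>
        ((\<forall>s\<in>{tv i..tv (Suc i)}. det2 (dtr 1 f s) (dtr 2 f s) \<noteq> 0) \<or>
         (\<exists>a b. u ` {tv i..tv (Suc i)} = closed_segment a b)))"

text \<open>u'(s), taken as the (two-sided) derivative; used only at non-vertex points or inside integrals.\<close>
definition du :: "(real \<Rightarrow> real \<times> real) \<Rightarrow> real \<Rightarrow> real \<times> real" where
  "du u s = vector_derivative u (at s)"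

definition vfield :: "(real \<Rightarrow> real \<times> real) \<Rightarrow> real \<Rightarrow> real \<times> real" where
  "vfield u s = scaleR (1 / det2 (u s) (du u s)) (du u s)"

text \<open>Admissible class C (curves extended 2T-periodically to the real line), with the scalar
  function r such that gamma' = r u' on each open piece.\<close>
definition admissible ::
  "real \<Rightarrow> nat \<Rightarrow> (nat \<Rightarrow> real) \<Rightarrow> (real \<Rightarrow> real \<times> real) \<Rightarrow> (real \<Rightarrow> real \<times> real) \<Rightarrow> (real \<Rightarrow> real) \<Rightarrow> bool" where
  "admissible T n tv u \<gamma> r \<longleftrightarrow>
     continuous_on UNIV \<gamma> \<and> (\<forall>s. \<gamma> (s + 2*T) = \<gamma> s) \<and>
     (\<forall>i<2*n. \<exists>g. smooth_fun g \<and> (\<forall>s\<in>{tv i..tv (Suc i)}. g s = \<gamma> s)) \<and>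
     (\<forall>i<2*n. \<forall>s\<in>{tv i<..<tv (Suc i)}. du \<gamma> s = scaleR (r s) (du u s))"

definition dual_length :: "real \<Rightarrow> (real \<Rightarrow> real \<times> real) \<Rightarrow> (real \<Rightarrow> real) \<Rightarrow> real" where
  "dual_length T u r = integral {0..2*T} (\<lambda>s. r s * det2 (u s) (du u s))"

definition mixed_area :: "real \<Rightarrow> (real \<Rightarrow> real \<times> real) \<Rightarrow> (real \<Rightarrow> real \<times> real) \<Rightarrow> real" where
  "mixed_area T \<gamma>1 \<gamma>2 = 1/2 * integral {0..2*T} (\<lambda>s. det2 (\<gamma>1 s) (du \<gamma>2 s))"

definition C0sym ::
  "real \<Rightarrow> nat \<Rightarrow> (nat \<Rightarrow> real) \<Rightarrow> (real \<Rightarrow> real \<times> real) \<Rightarrow> (real \<Rightarrow> real \<times> real) set" where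
  "C0sym T n tv u = {\<gamma>. \<exists>r. admissible T n tv u \<gamma> r \<and> (\<forall>s. \<gamma> (s + T) = - \<gamma> s) \<and>
                         dual_length T u r = 0}"

text \<open>Constant width: [gamma(t+T), v(t+T)] + [gamma(t), v(t)] = c for all non-vertex t
  (at vertices v is only defined one-sidedly).\<close>
definition C0cw ::
  "real \<Rightarrow> nat \<Rightarrow> (nat \<Rightarrow> real) \<Rightarrow> (real \<Rightarrow> real \<times> real) \<Rightarrow> (real \<Rightarrow> real \<times> real) set" where
  "C0cw T n tv u = {\<gamma>. \<exists>r. admissible T n tv u \<gamma> r \<and> dual_length T u r = 0 \<and>
       (\<exists>c. \<forall>i<2*n. \<forall>s\<in>{tv i<..<tv (Suc i)}.
            det2 (\<gamma> (s + T)) (vfield u (s + T)) + det2 (\<gamma> s) (vfield u s) = c)}"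

end

theory Submission
  imports Defs
begin

text \<open>Both orthogonality relations come from integration by parts on closed curves, which makes
  the mixed area symmetric. For the second one, A(\<lambda>u, \<gamma>) = \<lambda>/2 \<integral>[u, r u'] = \<lambda>/2 L*(\<gamma>) = 0.
  For the first one, A(\<gamma>1, \<gamma>2) = 1/2 \<integral>[\<gamma>2, \<gamma>1']. Off the vertices [u, u'] \<noteq> 0, because
  a tangent to the boundary of a convex body around 0 is never radial; since \<gamma>1' = r1 u' is
  parallel to u', this gives [\<gamma>2, \<gamma>1'] = [u, \<gamma>1'] [\<gamma>2, v]. The first factor is T-periodic
  for the antisymmetric \<gamma>1, and the second one has the constant sum c over antipodal points for
  \<gamma>2 of constant width. Folding [T, 2T] onto [0, T] therefore turns the integral into
  c \<integral>[0,T] [u, \<gamma>1'] = c/2 L*(\<gamma>1) = 0.\<close>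

lemma partition_less:
  assumes "\<forall>i<N. tv i < tv (Suc i)" "i < j" "j \<le> N"
  shows "(tv i :: real) < tv j"
  using lift_Suc_mono_less_ivl[of "{..<N}" tv i j] assms by fastforce

lemma partition_le:
  assumes "\<forall>i<N. tv i < tv (Suc i)" "i \<le> j" "j \<le> N"
  shows "(tv i :: real) \<le> tv j"
  using partition_less[OF assms(1)] assms(2,3) by (cases "i = j") (auto intro: less_imp_le)

lemma partition_open_piece:
  assumes "\<forall>i<N. tv i < tv (Suc i)" "(s :: real) \<in> {tv 0..tv N}" "s \<notin> tv ` {..N}"
  obtains i where "i < N" "tv i < s" "s < tv (Suc i)"
proof -
  define J where "J = {j. j \<le> N \<and> tv j < s}"
  have "finite J" unfolding J_def by auto
  have "0 \<in> J" using assms(2,3) unfolding J_def by force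
  define i where "i = Max J"
  have "i \<in> J" using Max_in[OF \<open>finite J\<close>] \<open>0 \<in> J\<close> i_def by blast
  then have "i < N" using assms(2) unfolding J_def by (cases "i = N") auto
  have "Suc i \<notin> J" using Max_ge[OF \<open>finite J\<close>, of "Suc i"] i_def by auto
  then have "s \<le> tv (Suc i)" using \<open>i < N\<close> unfolding J_def by auto
  moreover have "tv (Suc i) \<noteq> s" using assms(3) \<open>i < N\<close> by (metis Suc_leI atMost_iff image_eqI)
  ultimately show ?thesis using that \<open>i \<in> J\<close> \<open>i < N\<close> unfolding J_def by auto
qed

lemma smooth_fun_has_vector_derivative:
  assumes "smooth_fun g"
  shows "(g has_vector_derivative dtr 1 g s) (at s)"
proof -
  have "dtr 0 g differentiable (at s)" using assms unfolding smooth_fun_def by blast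
  then show ?thesis by (simp add: vector_derivative_works[symmetric])
qed

lemma smooth_fun_continuous_on_derivative:
  "smooth_fun g \<Longrightarrow> continuous_on S (dtr 1 g)"
  unfolding smooth_fun_def
  by (meson continuous_at_imp_continuous_on differentiable_imp_continuous_within)

lemma dtr_scaleR:
  assumes "smooth_fun f"
  shows "dtr k (\<lambda>s. c *\<^sub>R f s) = (\<lambda>s. c *\<^sub>R dtr k f s)"
proof (induction k)
  case (Suc k)
  have "\<And>s. dtr k f differentiable (at s)" using assms unfolding smooth_fun_def by blast
  then show ?case using Suc.IH by simp
qed simp

lemma smooth_fun_scaleR: "smooth_fun f \<Longrightarrow> smooth_fun (\<lambda>s. c *\<^sub>R f s)"
  unfolding smooth_fun_def by (simp add: dtr_scaleR[unfolded smooth_fun_def])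

lemma smooth_piece_has_vector_derivative:
  assumes "smooth_fun g" "\<forall>x\<in>{a..b}. g x = \<gamma> x" "a < s" "s < b"
  shows "(\<gamma> has_vector_derivative dtr 1 g s) (at s)"
  by (rule has_vector_derivative_transform_within_open
      [OF smooth_fun_has_vector_derivative[OF assms(1)], of "{a<..<b}"]) (use assms in auto)

lemma smooth_piece_du:
  assumes "smooth_fun g" "\<forall>x\<in>{a..b}. g x = \<gamma> x" "a < s" "s < b"
  shows "du \<gamma> s = dtr 1 g s"
  unfolding du_def using smooth_piece_has_vector_derivative[OF assms] by (rule vector_derivative_at)

definition piecewise_smooth :: "nat \<Rightarrow> (nat \<Rightarrow> real) \<Rightarrow> (real \<Rightarrow> real \<times> real) \<Rightarrow> bool" where
  "piecewise_smooth N tv \<gamma> \<longleftrightarrow> continuous_on UNIV \<gamma> \<and>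
     (\<forall>i<N. \<exists>g. smooth_fun g \<and> (\<forall>s\<in>{tv i..tv (Suc i)}. g s = \<gamma> s))"

lemma piecewise_smooth_has_vector_derivative:
  assumes "piecewise_smooth N tv \<gamma>" "i < N" "tv i < s" "s < tv (Suc i)"
  shows "(\<gamma> has_vector_derivative du \<gamma> s) (at s)"
proof -
  obtain g where g: "smooth_fun g" "\<forall>x\<in>{tv i..tv (Suc i)}. g x = \<gamma> x"
    using assms(1,2) unfolding piecewise_smooth_def by blast
  show ?thesis
    using smooth_piece_has_vector_derivative[OF g assms(3,4)] smooth_piece_du[OF g assms(3,4)]
    by simp
qed

lemma piecewise_smooth_scaleR:
  assumes "piecewise_smooth N tv \<gamma>"
  shows "piecewise_smooth N tv (\<lambda>s. c *\<^sub>R \<gamma> s)"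
  unfolding piecewise_smooth_def
proof (intro conjI allI impI)
  show "continuous_on UNIV (\<lambda>s. c *\<^sub>R \<gamma> s)"
    using assms unfolding piecewise_smooth_def by (intro continuous_intros) auto
  fix i assume "i < N"
  then obtain g where "smooth_fun g" "\<forall>s\<in>{tv i..tv (Suc i)}. g s = \<gamma> s"
    using assms unfolding piecewise_smooth_def by blast
  then show "\<exists>g. smooth_fun g \<and> (\<forall>s\<in>{tv i..tv (Suc i)}. g s = c *\<^sub>R \<gamma> s)"
    by (intro exI[of _ "\<lambda>s. c *\<^sub>R g s"]) (simp add: smooth_fun_scaleR)
qed

lemma piecewise_continuous_integrable_on:
  fixes f :: "real \<Rightarrow> 'a::banach"
  assumes "\<forall>i<N. tv i < tv (Suc i)"
    and "\<forall>i<N. \<exists>h. continuous_on {tv i..tv (Suc i)} h \<and> (\<forall>s\<in>{tv i<..<tv (Suc i)}. f s = h s)"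
  shows "f integrable_on {tv 0..tv N}"
  using assms
proof (induction N)
  case 0
  then show ?case using integrable_on_refl[of f "tv 0"] by simp
next
  case (Suc N)
  obtain h where h: "continuous_on {tv N..tv (Suc N)} h" "\<forall>s\<in>{tv N<..<tv (Suc N)}. f s = h s"
    using Suc.prems(2) by blast
  have "tv 0 \<le> tv N" using partition_le[OF Suc.prems(1), of 0 N] by simp
  moreover have "tv N \<le> tv (Suc N)" using Suc.prems(1) by (simp add: less_imp_le)
  moreover have "f integrable_on {tv 0..tv N}" using Suc by simp
  moreover have "f integrable_on {tv N..tv (Suc N)}"
    by (rule integrable_spike_finite[of "{tv N, tv (Suc N)}" _ _ h])
       (use h integrable_continuous_interval in auto)
  ultimately show ?case by (rule Henstock_Kurzweil_Integration.integrable_combine)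
qed

lemma abs_fst_snd_le_norm:
  fixes x :: "real \<times> real"
  shows "\<bar>fst x\<bar> \<le> norm x" "\<bar>snd x\<bar> \<le> norm x"
  using norm_fst_le[of "fst x" "snd x"] norm_snd_le[of "snd x" "fst x"] by simp_all

lemma bounded_bilinear_det2: "bounded_bilinear det2"
proof (rule bounded_bilinear.intro)
  show "\<exists>K. \<forall>a b. norm (det2 a b) \<le> norm a * norm b * K"
  proof (intro exI allI)
    fix a b :: "real \<times> real"
    have "\<bar>fst a * snd b\<bar> \<le> norm a * norm b" "\<bar>snd a * fst b\<bar> \<le> norm a * norm b"
      unfolding abs_mult by (intro mult_mono abs_fst_snd_le_norm; simp)+
    then show "norm (det2 a b) \<le> norm a * norm b * 2" unfolding det2_def by simp
  qed
qed (auto simp: det2_def algebra_simps)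

lemma det2_scaleR_left: "det2 (c *\<^sub>R x) y = c * det2 x y"
  and det2_scaleR_right: "det2 x (c *\<^sub>R y) = c * det2 x y"
  and det2_minus_minus: "det2 (- x) (- y) = det2 x y"
  and det2_commute: "det2 x y = - det2 y x"
  unfolding det2_def by (simp_all add: algebra_simps)

lemma det2_eq_0_imp_parallel:
  assumes "det2 p d = 0" "p \<noteq> 0"
  obtains l where "d = l *\<^sub>R p"
proof (cases "fst p = 0")
  case True
  then have "snd p \<noteq> 0" using assms(2) by (simp add: prod_eq_iff)
  then have "d = (snd d / snd p) *\<^sub>R p" using assms(1) True unfolding det2_def
    by (auto simp: prod_eq_iff)
  then show ?thesis using that by blast
next
  case False
  then have "d = (fst d / fst p) *\<^sub>R p" using assms(1) unfolding det2_def
    by (auto simp: prod_eq_iff field_simps)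
  then show ?thesis using that by blast
qed

text \<open>With p = u and a = u' the second factor is [g, v].\<close>
lemma det2_factor_through:
  assumes "det2 p a \<noteq> 0"
  shows "det2 g (r *\<^sub>R a) = det2 p (r *\<^sub>R a) * det2 g ((1 / det2 p a) *\<^sub>R a)"
  using assms by (simp add: det2_scaleR_right)

lemma piecewise_smooth_det2_integrable:
  assumes "\<forall>i<N. tv i < tv (Suc i)" "piecewise_smooth N tv \<alpha>" "piecewise_smooth N tv \<beta>"
  shows "(\<lambda>s. det2 (\<alpha> s) (du \<beta> s)) integrable_on {tv 0..tv N}"
proof (rule piecewise_continuous_integrable_on[OF assms(1)], intro allI impI)
  fix i assume "i < N"
  obtain g where g: "smooth_fun g" "\<forall>s\<in>{tv i..tv (Suc i)}. g s = \<beta> s"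
    using assms(3) \<open>i < N\<close> unfolding piecewise_smooth_def by blast
  have "continuous_on {tv i..tv (Suc i)} (\<lambda>s. det2 (\<alpha> s) (dtr 1 g s))"
    using assms(2) smooth_fun_continuous_on_derivative[OF g(1)] unfolding piecewise_smooth_def
    by (intro bounded_bilinear.continuous_on[OF bounded_bilinear_det2])
       (auto intro: continuous_on_subset)
  moreover have "\<forall>s\<in>{tv i<..<tv (Suc i)}. det2 (\<alpha> s) (du \<beta> s) = det2 (\<alpha> s) (dtr 1 g s)"
    using smooth_piece_du[OF g] by simp
  ultimately show "\<exists>h. continuous_on {tv i..tv (Suc i)} h \<and>
      (\<forall>s\<in>{tv i<..<tv (Suc i)}. det2 (\<alpha> s) (du \<beta> s) = h s)" by blast
qed

lemma integral_det2_du_commute: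
  assumes mono: "\<forall>i<N. tv i < tv (Suc i)"
    and \<alpha>: "piecewise_smooth N tv \<alpha>" and \<beta>: "piecewise_smooth N tv \<beta>"
    and closed: "det2 (\<alpha> (tv N)) (\<beta> (tv N)) = det2 (\<alpha> (tv 0)) (\<beta> (tv 0))"
  shows "integral {tv 0..tv N} (\<lambda>s. det2 (\<alpha> s) (du \<beta> s)) =
         integral {tv 0..tv N} (\<lambda>s. det2 (\<beta> s) (du \<alpha> s))"
proof -
  let ?I = "integral {tv 0..tv N} (\<lambda>s. det2 (\<alpha> s) (du \<beta> s))"
  have "((\<lambda>s. det2 (du \<alpha> s) (\<beta> s)) has_integral - ?I) {tv 0..tv N}"
  proof (rule integration_by_parts_interior_strong[OF bounded_bilinear_det2, of "tv ` {..N}"])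
    show "tv 0 \<le> tv N" using partition_le[OF mono, of 0 N] by simp
    show "continuous_on {tv 0..tv N} \<alpha>" "continuous_on {tv 0..tv N} \<beta>"
      using \<alpha> \<beta> unfolding piecewise_smooth_def by (auto intro: continuous_on_subset)
    show "((\<lambda>s. det2 (\<alpha> s) (du \<beta> s)) has_integral
        det2 (\<alpha> (tv N)) (\<beta> (tv N)) - det2 (\<alpha> (tv 0)) (\<beta> (tv 0)) - - ?I) {tv 0..tv N}"
      using closed piecewise_smooth_det2_integrable[OF mono \<alpha> \<beta>] by (simp add: integrable_integral)
  next
    fix x assume "x \<in> {tv 0<..<tv N} - tv ` {..N}"
    then obtain i where i: "i < N" "tv i < x" "x < tv (Suc i)"
      using partition_open_piece[OF mono, of x] by auto
    show "(\<alpha> has_vector_derivative du \<alpha> x) (at x)" "(\<beta> has_vector_derivative du \<beta> x) (at x)"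
      using piecewise_smooth_has_vector_derivative[OF _ i] \<alpha> \<beta> by auto
  qed simp
  moreover have "(\<lambda>s. det2 (du \<alpha> s) (\<beta> s)) = (\<lambda>s. - det2 (\<beta> s) (du \<alpha> s))"
    by (rule ext) (rule det2_commute)
  ultimately have "((\<lambda>s. det2 (\<beta> s) (du \<alpha> s)) has_integral ?I) {tv 0..tv N}"
    by (simp add: has_integral_neg_iff)
  then show ?thesis by (simp add: integral_unique)
qed

lemma symmetric_convex_zero_in_interior:
  fixes U :: "'a::euclidean_space set"
  assumes "convex U" "\<forall>x\<in>U. - x \<in> U" "interior U \<noteq> {}"
  shows "0 \<in> interior U"
proof -
  obtain x where x: "x \<in> interior U" using assms(3) by auto
  show ?thesis
  proof (cases "x = 0")
    case False
    have "- x \<in> closure U" using x assms(2) interior_subset closure_subset by blast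
    moreover have "x \<noteq> - x" using False by (simp add: eq_neg_iff_add_eq_0 flip: scaleR_2)
    then have "0 \<in> open_segment x (- x)"
      using midpoint_in_open_segment[of x "- x"] by (simp add: midpoint_def)
    ultimately show ?thesis using in_interior_closure_convex_segment[OF assms(1) x] by blast
  qed (use x in simp)
qed

text \<open>p = (q + t w) / (1 + t) with w := ((1 + t) p - q) / t in the ball around 0.\<close>
lemma convex_interior_near_dilation:
  fixes U :: "'a::euclidean_space set"
  assumes "convex U" "ball 0 \<epsilon> \<subseteq> U" "q \<in> closure U" "t > 0"
    and "norm (q - (1 + t) *\<^sub>R p) < t * \<epsilon>"
  shows "p \<in> interior U"
proof -
  define w where "w = (1 / t) *\<^sub>R ((1 + t) *\<^sub>R p - q)"
  have "norm w = norm (q - (1 + t) *\<^sub>R p) / t"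
    using assms(4) unfolding w_def by (simp add: norm_minus_commute)
  then have "w \<in> ball 0 \<epsilon>" using assms(4,5) by (simp add: divide_less_eq mult.commute)
  then have "w \<in> interior U" using interior_maximal[OF assms(2) open_ball] by blast
  then have "q - (t / (1 + t)) *\<^sub>R (q - w) \<in> interior U"
    using mem_interior_closure_convex_shrink[OF assms(1) _ assms(3)] assms(4) by simp
  moreover have "q - (t / (1 + t)) *\<^sub>R (q - w) = p"
  proof -
    have "(t + t * t) / (1 + t) = t" using assms(4) by (simp add: field_simps)
    then have "(1 + t) *\<^sub>R (q - (t / (1 + t)) *\<^sub>R (q - w)) = (1 + t) *\<^sub>R p"
      using assms(4) unfolding w_def by (simp add: algebra_simps)
    then show ?thesis using assms(4) by simp
  qed
  ultimately show ?thesis by simp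
qed

lemma det2_tangent_frontier_neq_0:
  fixes U :: "(real \<times> real) set"
  assumes "convex U" "0 \<in> interior U"
    and deriv: "(u has_vector_derivative d) (at s)" "d \<noteq> 0"
    and frontier: "\<forall>h. \<bar>h\<bar> < \<delta> \<longrightarrow> u (s + h) \<in> frontier U" "\<delta> > 0"
  shows "det2 (u s) d \<noteq> 0"
proof
  assume "det2 (u s) d = 0"
  have "u s \<in> frontier U" using frontier by (metis abs_zero add_0_right)
  then have "u s \<notin> interior U" "u s \<noteq> 0" using assms(2) by (auto simp: frontier_def)
  then obtain l where l: "d = l *\<^sub>R u s"
    using det2_eq_0_imp_parallel \<open>det2 (u s) d = 0\<close> by blast
  then have "l \<noteq> 0" using deriv(2) by auto
  obtain \<epsilon> where "\<epsilon> > 0" "ball 0 \<epsilon> \<subseteq> U" using assms(2) mem_interior by blast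
  have "\<bar>l\<bar> * \<epsilon> / 2 > 0" using \<open>l \<noteq> 0\<close> \<open>\<epsilon> > 0\<close> by simp
  then obtain \<rho> where "\<rho> > 0" and \<rho>: "\<And>y. norm (y - s) < \<rho> \<Longrightarrow>
      norm (u y - u s - (y - s) *\<^sub>R d) \<le> \<bar>l\<bar> * \<epsilon> / 2 * norm (y - s)"
    using deriv(1) unfolding has_vector_derivative_def has_derivative_at_alt by blast
  text \<open>Move along the curve in the direction in which u' points away from 0.\<close>
  define h where "h = sgn l * (min \<rho> \<delta> / 2)"
  define t where "t = l * h"
  have h: "\<bar>h\<bar> < \<rho>" "\<bar>h\<bar> < \<delta>" and t: "t = \<bar>l\<bar> * \<bar>h\<bar>" "t > 0"
    using \<open>\<rho> > 0\<close> frontier(2) \<open>l \<noteq> 0\<close>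
    by (auto simp: h_def t_def abs_mult sgn_if mult_less_0_iff)
  have "norm (u (s + h) - (1 + t) *\<^sub>R u s) \<le> \<bar>l\<bar> * \<epsilon> / 2 * \<bar>h\<bar>"
    using \<rho>[of "s + h"] h(1) unfolding l t_def by (simp add: algebra_simps)
  also have "\<dots> < t * \<epsilon>" using mult_pos_pos[OF t(2) \<open>\<epsilon> > 0\<close>] t(1) by (simp add: algebra_simps)
  finally have "norm (u (s + h) - (1 + t) *\<^sub>R u s) < t * \<epsilon>" .
  moreover have "u (s + h) \<in> closure U" using frontier(1) h(2) by (simp add: frontier_def)
  ultimately have "u s \<in> interior U"
    using convex_interior_near_dilation[OF assms(1) \<open>ball 0 \<epsilon> \<subseteq> U\<close> _ t(2)] by blast
  then show False using \<open>u s \<notin> interior U\<close> by simp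
qed

lemma integral_spike_finite:
  assumes "finite S" "\<And>x. x \<in> A - S \<Longrightarrow> f x = g x"
  shows "integral A f = integral A g"
  using integral_spike[OF negligible_finite[OF assms(1)], of A g f] assms(2) by metis

lemma integral_fold_half_period:
  fixes f :: "real \<Rightarrow> 'a::banach"
  assumes "f integrable_on {0..2*T}" "T \<ge> 0"
  shows "integral {0..2*T} f = integral {0..T} (\<lambda>s. f s + f (s + T))"
proof -
  have "f integrable_on {0..T}" "f integrable_on {T..2*T}"
    using integrable_subinterval_real[OF assms(1)] assms(2) by auto
  then have shifted: "((\<lambda>s. f (s + T)) has_integral integral {T..2*T} f) {0..T}"
    using has_integral_shift_real_ivl[of f _ T "2*T" T] by auto
  have "integral {0..2*T} f = integral {0..T} f + integral {T..2*T} f"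
    by (rule Henstock_Kurzweil_Integration.integral_combine[symmetric]) (use assms in auto)
  also have "\<dots> = integral {0..T} (\<lambda>s. f s + f (s + T))"
    using integral_add[OF \<open>f integrable_on {0..T}\<close> has_integral_integrable[OF shifted]]
      integral_unique[OF shifted] by simp
  finally show ?thesis .
qed

lemma antiperiodic_has_vector_derivative:
  assumes "\<forall>x. \<gamma> (x + T) = - \<gamma> x" "(\<gamma> has_vector_derivative d) (at s)"
  shows "(\<gamma> has_vector_derivative - d) (at (s + T))"
proof -
  have "((\<lambda>x. x - T) has_vector_derivative 1) (at (s + T))"
    by (auto intro!: derivative_eq_intros simp flip: has_real_derivative_iff_has_vector_derivative)
  moreover have "((\<lambda>x. - \<gamma> x) has_vector_derivative - d) (at ((\<lambda>x. x - T) (s + T)))"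
    using assms(2) by (simp add: has_vector_derivative_minus)
  ultimately have "(((\<lambda>x. - \<gamma> x) \<circ> (\<lambda>x. x - T)) has_vector_derivative 1 *\<^sub>R - d) (at (s + T))"
    by (rule vector_diff_chain_at)
  moreover have "(\<lambda>x. - \<gamma> x) \<circ> (\<lambda>x. x - T) = \<gamma>"
  proof
    show "((\<lambda>x. - \<gamma> x) \<circ> (\<lambda>x. x - T)) x = \<gamma> x" for x
      using assms(1)[rule_format, of "x - T"] by simp
  qed
  ultimately show ?thesis by simp
qed

lemma admissibleD:
  assumes "admissible T n tv u \<gamma> r"
  shows "piecewise_smooth (2*n) tv \<gamma>" "\<gamma> (2*T) = \<gamma> 0"
    "\<And>i s. i < 2*n \<Longrightarrow> tv i < s \<Longrightarrow> s < tv (Suc i) \<Longrightarrow> du \<gamma> s = r s *\<^sub>R du u s"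
  using assms spec[of "\<lambda>s. \<gamma> (s + 2*T) = \<gamma> s" 0]
  unfolding admissible_def piecewise_smooth_def by auto

locale unit_ball_boundary =
  fixes T :: real and n :: nat and tv :: "nat \<Rightarrow> real"
    and u :: "real \<Rightarrow> real \<times> real" and U :: "(real \<times> real) set"
  assumes setting: "unit_ball_setting T n tv u U"
begin

lemma T_pos: "T > 0"
  and tv_increasing: "\<forall>i<2*n. tv i < tv (Suc i)"
  and tv_0: "tv 0 = 0"
  and tv_2n: "tv (2*n) = 2*T"
  and tv_shift: "\<And>i. i \<le> n \<Longrightarrow> tv (i + n) = tv i + T"
  and u_antiperiodic: "\<forall>s. u (s + T) = - u s"
  and u_closed: "u (2*T) = u 0"
  using setting spec[of "\<lambda>s. u (s + 2*T) = u s" 0] unfolding unit_ball_setting_def by auto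

lemma tv_n: "tv n = T"
  using tv_shift[of 0] tv_0 by simp

lemma piecewise_smooth_u: "piecewise_smooth (2*n) tv u"
  using setting unfolding unit_ball_setting_def piecewise_smooth_def by metis

lemma open_piece:
  assumes "s \<in> {0..2*T} - tv ` {..2*n}"
  obtains i where "i < 2*n" "tv i < s" "s < tv (Suc i)"
  using partition_open_piece[OF tv_increasing, of s] assms tv_0 tv_2n by auto

lemma antipodal_open_piece:
  assumes "s \<in> {0..T} - tv ` {..2*n}"
  obtains i where "i < n" "tv i < s" "s < tv (Suc i)"
    "tv (i + n) < s + T" "s + T < tv (Suc (i + n))"
proof -
  obtain i where i: "i < 2*n" "tv i < s" "s < tv (Suc i)"
    using open_piece[of s] assms T_pos by auto
  have "s < T" using assms tv_n by force
  then have "i < n" using partition_le[OF tv_increasing, of n i] i tv_n by force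
  then show ?thesis using that i tv_shift[of i] tv_shift[of "Suc i"] by simp
qed

lemma integral_det2_du_commute_closed:
  assumes "piecewise_smooth (2*n) tv \<alpha>" "piecewise_smooth (2*n) tv \<beta>"
    "\<alpha> (2*T) = \<alpha> 0" "\<beta> (2*T) = \<beta> 0"
  shows "integral {0..2*T} (\<lambda>s. det2 (\<alpha> s) (du \<beta> s)) =
         integral {0..2*T} (\<lambda>s. det2 (\<beta> s) (du \<alpha> s))"
  using integral_det2_du_commute[OF tv_increasing assms(1,2)] assms(3,4) tv_0 tv_2n by simp

lemma det2_integrable_closed:
  assumes "piecewise_smooth (2*n) tv \<alpha>" "piecewise_smooth (2*n) tv \<beta>"
  shows "(\<lambda>s. det2 (\<alpha> s) (du \<beta> s)) integrable_on {0..2*T}"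
  using piecewise_smooth_det2_integrable[OF tv_increasing assms] tv_0 tv_2n by simp

lemma mixed_area_commute:
  assumes "admissible T n tv u \<gamma>1 r1" "admissible T n tv u \<gamma>2 r2"
  shows "mixed_area T \<gamma>1 \<gamma>2 = mixed_area T \<gamma>2 \<gamma>1"
  unfolding mixed_area_def
  using integral_det2_du_commute_closed[OF admissibleD(1)[OF assms(1)] admissibleD(1)[OF assms(2)]
      admissibleD(2)[OF assms(1)] admissibleD(2)[OF assms(2)]] by simp

lemma du_u_on_open_piece:
  assumes "i < 2*n" "tv i < s" "s < tv (Suc i)"
  shows "(u has_vector_derivative du u s) (at s)" "du u s \<noteq> 0"
proof -
  obtain f where f: "smooth_fun f" "\<forall>x\<in>{tv i..tv (Suc i)}. f x = u x \<and> dtr 1 f x \<noteq> 0"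
    using setting assms(1) unfolding unit_ball_setting_def by meson
  then have "du u s = dtr 1 f s" using smooth_piece_du[OF f(1) _ assms(2,3)] by auto
  then show "du u s \<noteq> 0" using f(2) assms(2,3) by simp
  show "(u has_vector_derivative du u s) (at s)"
    by (rule piecewise_smooth_has_vector_derivative[OF piecewise_smooth_u assms])
qed

lemma det2_u_du_neq_0:
  assumes "i < 2*n" "tv i < s" "s < tv (Suc i)"
  shows "det2 (u s) (du u s) \<noteq> 0"
proof -
  have U: "convex U" "\<forall>x\<in>U. - x \<in> U" "interior U \<noteq> {}" "frontier U = u ` {0..2*T}"
    using setting unfolding unit_ball_setting_def by auto
  have "0 \<le> tv i" "tv (Suc i) \<le> 2*T"
    using partition_le[OF tv_increasing, of 0 i] partition_le[OF tv_increasing, of "Suc i" "2*n"]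
      assms(1) tv_0 tv_2n by auto
  then have "\<forall>h. \<bar>h\<bar> < min s (2*T - s) \<longrightarrow> u (s + h) \<in> frontier U" "min s (2*T - s) > 0"
    using U(4) assms(2,3) by (auto intro!: image_eqI[OF refl])
  then show ?thesis
    using det2_tangent_frontier_neq_0[OF U(1) symmetric_convex_zero_in_interior[OF U(1-3)]]
      du_u_on_open_piece[OF assms] by blast
qed

lemma integral_det2_u_du_eq_dual_length:
  assumes "admissible T n tv u \<gamma> r"
  shows "integral {0..2*T} (\<lambda>s. det2 (u s) (du \<gamma> s)) = dual_length T u r"
  unfolding dual_length_def
proof (rule integral_spike_finite[of "tv ` {..2*n}"])
  fix s assume "s \<in> {0..2*T} - tv ` {..2*n}"
  then obtain i where "i < 2*n" "tv i < s" "s < tv (Suc i)" by (rule open_piece)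
  then show "det2 (u s) (du \<gamma> s) = r s * det2 (u s) (du u s)"
    using admissibleD(3)[OF assms] by (simp add: det2_scaleR_right)
qed simp

lemma mixed_area_scaleR_u:
  assumes "admissible T n tv u \<gamma> r" "dual_length T u r = 0"
  shows "mixed_area T (\<lambda>s. c *\<^sub>R u s) \<gamma> = 0" "mixed_area T \<gamma> (\<lambda>s. c *\<^sub>R u s) = 0"
proof -
  show cu: "mixed_area T (\<lambda>s. c *\<^sub>R u s) \<gamma> = 0"
    using integral_det2_u_du_eq_dual_length[OF assms(1)] assms(2)
    unfolding mixed_area_def by (simp add: det2_scaleR_left)
  have "piecewise_smooth (2*n) tv (\<lambda>s. c *\<^sub>R u s)"
    by (rule piecewise_smooth_scaleR[OF piecewise_smooth_u])
  then show "mixed_area T \<gamma> (\<lambda>s. c *\<^sub>R u s) = 0"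
    using cu u_closed integral_det2_du_commute_closed
        [OF admissibleD(1)[OF assms(1)] _ admissibleD(2)[OF assms(1)]]
    unfolding mixed_area_def by simp
qed

lemma antipodal_det2_identities:
  assumes \<gamma>1: "admissible T n tv u \<gamma>1 r1" "\<forall>s. \<gamma>1 (s + T) = - \<gamma>1 s"
    and cw: "\<forall>i<2*n. \<forall>s\<in>{tv i<..<tv (Suc i)}.
            det2 (\<gamma>2 (s + T)) (vfield u (s + T)) + det2 (\<gamma>2 s) (vfield u s) = c"
    and s: "s \<in> {0..T} - tv ` {..2*n}"
  shows "det2 (u (s + T)) (du \<gamma>1 (s + T)) = det2 (u s) (du \<gamma>1 s)"
    "det2 (\<gamma>2 s) (du \<gamma>1 s) + det2 (\<gamma>2 (s + T)) (du \<gamma>1 (s + T)) = c * det2 (u s) (du \<gamma>1 s)"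
proof -
  obtain i where i: "i < n" "tv i < s" "s < tv (Suc i)"
    and j: "tv (i + n) < s + T" "s + T < tv (Suc (i + n))"
    using antipodal_open_piece[OF s] by blast
  have "i < 2*n" "i + n < 2*n" using i(1) by auto
  have "du \<gamma>1 (s + T) = - du \<gamma>1 s"
    using antiperiodic_has_vector_derivative[OF \<gamma>1(2)
        piecewise_smooth_has_vector_derivative[OF admissibleD(1)[OF \<gamma>1(1)] \<open>i < 2*n\<close> i(2,3)]]
    unfolding du_def by (rule vector_derivative_at)
  then show periodic: "det2 (u (s + T)) (du \<gamma>1 (s + T)) = det2 (u s) (du \<gamma>1 s)"
    using u_antiperiodic by (simp add: det2_minus_minus)
  define W where "W x = det2 (\<gamma>2 x) (vfield u x)" for x
  have factor: "det2 (\<gamma>2 x) (du \<gamma>1 x) = det2 (u x) (du \<gamma>1 x) * W x"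
    if "k < 2*n" "tv k < x" "x < tv (Suc k)" for k x
    unfolding W_def vfield_def admissibleD(3)[OF \<gamma>1(1) that]
    by (rule det2_factor_through[OF det2_u_du_neq_0[OF that]])
  have "det2 (\<gamma>2 s) (du \<gamma>1 s) + det2 (\<gamma>2 (s + T)) (du \<gamma>1 (s + T)) =
      det2 (u s) (du \<gamma>1 s) * (W (s + T) + W s)"
    using factor[OF \<open>i < 2*n\<close> i(2,3)] factor[OF \<open>i + n < 2*n\<close> j] periodic
    by (simp add: algebra_simps)
  also have "W (s + T) + W s = c" using cw \<open>i < 2*n\<close> i(2,3) unfolding W_def by auto
  finally show "det2 (\<gamma>2 s) (du \<gamma>1 s) + det2 (\<gamma>2 (s + T)) (du \<gamma>1 (s + T)) =
      c * det2 (u s) (du \<gamma>1 s)" by simp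
qed

lemma mixed_area_antisymmetric_constant_width:
  assumes \<gamma>1: "admissible T n tv u \<gamma>1 r1" "\<forall>s. \<gamma>1 (s + T) = - \<gamma>1 s" "dual_length T u r1 = 0"
    and \<gamma>2: "admissible T n tv u \<gamma>2 r2"
    and cw: "\<forall>i<2*n. \<forall>s\<in>{tv i<..<tv (Suc i)}.
            det2 (\<gamma>2 (s + T)) (vfield u (s + T)) + det2 (\<gamma>2 s) (vfield u s) = c"
  shows "mixed_area T \<gamma>1 \<gamma>2 = 0"
proof -
  define H where "H s = det2 (u s) (du \<gamma>1 s)" for s
  define I where "I s = det2 (\<gamma>2 s) (du \<gamma>1 s)" for s
  note identities = antipodal_det2_identities[OF \<gamma>1(1,2) cw]
  have "H integrable_on {0..2*T}" "I integrable_on {0..2*T}"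
    unfolding H_def I_def
    using det2_integrable_closed piecewise_smooth_u admissibleD(1)[OF \<gamma>1(1)]
      admissibleD(1)[OF \<gamma>2] by auto
  note fold = integral_fold_half_period[OF _ less_imp_le[OF T_pos]]
  have "0 = integral {0..2*T} H"
    using integral_det2_u_du_eq_dual_length[OF \<gamma>1(1)] \<gamma>1(3) unfolding H_def by simp
  also have "\<dots> = integral {0..T} (\<lambda>s. H s + H (s + T))"
    by (rule fold[OF \<open>H integrable_on {0..2*T}\<close>])
  also have "\<dots> = integral {0..T} (\<lambda>s. 2 * H s)"
    by (rule integral_spike_finite[of "tv ` {..2*n}"]) (use identities(1) in \<open>auto simp: H_def\<close>)
  finally have "integral {0..T} H = 0" by simp
  have "integral {0..2*T} I = integral {0..T} (\<lambda>s. I s + I (s + T))"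
    by (rule fold[OF \<open>I integrable_on {0..2*T}\<close>])
  also have "\<dots> = integral {0..T} (\<lambda>s. c * H s)"
    by (rule integral_spike_finite[of "tv ` {..2*n}"])
       (use identities(2) in \<open>auto simp: H_def I_def\<close>)
  also have "\<dots> = 0" using \<open>integral {0..T} H = 0\<close> by simp
  finally show ?thesis
    using mixed_area_commute[OF \<gamma>1(1) \<gamma>2] unfolding mixed_area_def I_def by simp
qed

end

theorem mainTheorem7:
  assumes "unit_ball_setting T n tv u U"
  shows "(\<forall>\<gamma>1 \<in> C0sym T n tv u. \<forall>\<gamma>2 \<in> C0cw T n tv u. mixed_area T \<gamma>1 \<gamma>2 = 0) \<and>
         (\<forall>\<gamma> \<in> C0sym T n tv u \<union> C0cw T n tv u. \<forall>c::real.
            mixed_area T \<gamma> (\<lambda>s. scaleR c (u s)) = 0 \<and> mixed_area T (\<lambda>s. scaleR c (u s)) \<gamma> = 0)"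
proof -
  interpret unit_ball_boundary T n tv u U using assms by unfold_locales
  show ?thesis
  proof (intro conjI ballI allI)
    fix \<gamma>1 \<gamma>2 assume "\<gamma>1 \<in> C0sym T n tv u" "\<gamma>2 \<in> C0cw T n tv u"
    then show "mixed_area T \<gamma>1 \<gamma>2 = 0"
      unfolding C0sym_def C0cw_def using mixed_area_antisymmetric_constant_width by blast
  next
    fix \<gamma> c assume "\<gamma> \<in> C0sym T n tv u \<union> C0cw T n tv u"
    then obtain r where "admissible T n tv u \<gamma> r" "dual_length T u r = 0"
      unfolding C0sym_def C0cw_def by blast
    then show "mixed_area T \<gamma> (\<lambda>s. c *\<^sub>R u s) = 0" "mixed_area T (\<lambda>s. c *\<^sub>R u s) \<gamma> = 0"
      using mixed_area_scaleR_u by blast+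
  qed
qed

end
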